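(* $H$ is continuous on $\Gamma$.
   Context: Let $G=(\mathbb{V},E)$ be a finite graph with adjacency $\sim$. Let $a_{ij}=a_{ji}\ge0$ ($>0$ only if $i\sim j$) and $p_{ij}=p_{ji}\in[0,1]$ ($=0$ if $i\not\sim j$), with some $a_{ij}p_{ij}>0$. Fix $h_1\in(0,1]$; $\Delta$ is the set of arrays $x=(x_{ij})$ with $x_{ij}=x_{ji}\ge0$, $x_{ij}=0$ if $i\not\sim j$, $\sum_{i,j}x_{ij}=1$, $\sum_{(i,j):a_{ij}p_{ij}>0}x_{ij}\ge h_1$; $x_i=\sum_jx_{ij}$. $H(x)=\sum_{(i,j):x_{ij}>0}a_{ij}p_{ij}x_{ij}^2/(x_ix_j)$; $F(x)_{ij}=x_{ij}\big(a_{ij}p_{ij}\frac{x_{ij}}{x_ix_j}-H(x)\big)$, with $F_{ij}=0$ if $x_{ij}=0$ and $a_{ij}p_{ij}x_{ij}/(x_ix_j):=0$ if $a_{ij}p_{ij}=0$. $\Gamma=\{x\in\Delta:F(x)=0\}$, with the topology induced from $\mathbb{R}^{\mathbb{V}\times\mathbb{V}}$. *)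

theory Defs
  imports "HOL-Analysis.Analysis"
begin

text \<open>Arrays x = (x_ij) indexed by V x V, V a finite type; represented as
  real^'v^'v (x $ i $ j), which carries the Euclidean topology of R^(V x V).\<close>

definition vsum :: "real^'v::finite^'v \<Rightarrow> 'v \<Rightarrow> real" where
  "vsum x i = (\<Sum>j\<in>UNIV. x $ i $ j)"

definition Delta :: "('v::finite \<Rightarrow> 'v \<Rightarrow> bool) \<Rightarrow> ('v \<Rightarrow> 'v \<Rightarrow> real) \<Rightarrow> ('v \<Rightarrow> 'v \<Rightarrow> real)
    \<Rightarrow> real \<Rightarrow> (real^'v^'v) set" where
  "Delta adj a p h1 = {x. (\<forall>i j. x $ i $ j = x $ j $ i \<and> x $ i $ j \<ge> 0)
     \<and> (\<forall>i j. \<not> adj i j \<longrightarrow> x $ i $ j = 0)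
     \<and> (\<Sum>i\<in>UNIV. \<Sum>j\<in>UNIV. x $ i $ j) = 1
     \<and> (\<Sum>(i,j)\<in>{(i,j). a i j * p i j > 0}. x $ i $ j) \<ge> h1}"

definition Hfun :: "('v::finite \<Rightarrow> 'v \<Rightarrow> real) \<Rightarrow> ('v \<Rightarrow> 'v \<Rightarrow> real) \<Rightarrow> real^'v^'v \<Rightarrow> real" where
  "Hfun a p x = (\<Sum>i\<in>UNIV. \<Sum>j\<in>UNIV.
     if x $ i $ j > 0 \<and> a i j * p i j > 0
     then a i j * p i j * (x $ i $ j)\<^sup>2 / (vsum x i * vsum x j) else 0)"

definition Ffun :: "('v::finite \<Rightarrow> 'v \<Rightarrow> real) \<Rightarrow> ('v \<Rightarrow> 'v \<Rightarrow> real) \<Rightarrow> real^'v^'v \<Rightarrow> 'v \<Rightarrow> 'v \<Rightarrow> real" where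
  "Ffun a p x i j =
     (if x $ i $ j = 0 then 0
      else x $ i $ j * ((if a i j * p i j > 0 then a i j * p i j * x $ i $ j / (vsum x i * vsum x j) else 0)
                        - Hfun a p x))"

definition Gamma :: "('v::finite \<Rightarrow> 'v \<Rightarrow> bool) \<Rightarrow> ('v \<Rightarrow> 'v \<Rightarrow> real) \<Rightarrow> ('v \<Rightarrow> 'v \<Rightarrow> real)
    \<Rightarrow> real \<Rightarrow> (real^'v^'v) set" where
  "Gamma adj a p h1 = {x \<in> Delta adj a p h1. \<forall>i j. Ffun a p x i j = 0}"

end

theory Submission
  imports Defs
begin

text \<open>At a rest point every positive entry x_ij with a_ij p_ij > 0 satisfies
  H(x) = a_ij p_ij x_ij / (x_i x_j). Since h1 > 0, every x in Gamma has such an entry, and it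
  stays positive on a neighbourhood of x; there H agrees with this ratio, which is continuous
  because x_i, x_j \<ge> x_ij > 0.\<close>

lemma continuous_on_if_locally_agrees:
  assumes "\<And>x. x \<in> S \<Longrightarrow> \<exists>U g. open U \<and> x \<in> U \<and> isCont g x \<and> (\<forall>y\<in>S \<inter> U. g y = f y)"
  shows "continuous_on S f"
  unfolding continuous_on_eq_continuous_within
proof
  fix x assume "x \<in> S"
  then obtain U g where U: "open U" "x \<in> U" and g: "isCont g x" and agree: "\<forall>y\<in>S \<inter> U. g y = f y"
    using assms by blast
  have "(g \<longlongrightarrow> f x) (at x within S)"
    using g agree \<open>x \<in> S\<close> U by (metis IntI continuous_at_imp_continuous_within continuous_within)
  moreover have "openin (top_of_set S) (S \<inter> U)"
    using U(1) by (rule openin_open_Int)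
  ultimately have "(f \<longlongrightarrow> f x) (at x within S)"
    by (rule Lim_transform_within_openin) (use U agree \<open>x \<in> S\<close> in auto)
  then show "continuous (at x within S) f"
    by (simp add: continuous_within)
qed

lemma entry_le_vsum:
  assumes "\<And>k. 0 \<le> x $ i $ k"
  shows "x $ i $ j \<le> vsum x i"
  unfolding vsum_def using assms by (intro member_le_sum[of j UNIV "\<lambda>k. x $ i $ k", simplified])

lemma Delta_ex_positive_weighted_entry:
  assumes "x \<in> Delta adj a p h1" "0 < h1"
  obtains i j where "x $ i $ j > 0" "a i j * p i j > 0"
proof -
  let ?S = "{(i,j). a i j * p i j > 0}"
  have "(\<Sum>(i,j)\<in>?S. x $ i $ j) > 0"
    using assms unfolding Delta_def by auto
  then obtain ij where "ij \<in> ?S" "(case ij of (i,j) \<Rightarrow> x $ i $ j) > 0"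
    using sum_nonpos[of ?S "\<lambda>(i,j). x $ i $ j"] by (meson not_le)
  then show thesis using that by auto
qed

lemma Hfun_eq_ratio_on_Gamma:
  assumes "y \<in> Gamma adj a p h1" "y $ i $ j > 0" "a i j * p i j > 0"
  shows "Hfun a p y = a i j * p i j * y $ i $ j / (vsum y i * vsum y j)"
proof -
  have "Ffun a p y i j = 0" using assms(1) unfolding Gamma_def by auto
  then show ?thesis using assms(2,3) unfolding Ffun_def by auto
qed

lemma isCont_entry_ratio:
  assumes "vsum x i > 0" "vsum x j > 0"
  shows "isCont (\<lambda>y. c * y $ i $ j / (vsum y i * vsum y j)) x"
  using assms unfolding vsum_def by (intro continuous_intros) auto

theorem lemma9:
  fixes adj :: "'v::finite \<Rightarrow> 'v \<Rightarrow> bool" and a p :: "'v \<Rightarrow> 'v \<Rightarrow> real" and h1 :: real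
  assumes adj_sym: "\<And>i j. adj i j \<longleftrightarrow> adj j i"
    and a_sym: "\<And>i j. a i j = a j i" and a_nonneg: "\<And>i j. a i j \<ge> 0"
    and a_adj: "\<And>i j. a i j > 0 \<Longrightarrow> adj i j"
    and p_sym: "\<And>i j. p i j = p j i" and p_range: "\<And>i j. 0 \<le> p i j \<and> p i j \<le> 1"
    and p_adj: "\<And>i j. \<not> adj i j \<Longrightarrow> p i j = 0"
    and ap_pos: "\<exists>i j. a i j * p i j > 0"
    and h1: "0 < h1" "h1 \<le> 1"
  shows "continuous_on (Gamma adj a p h1) (Hfun a p)"
proof (rule continuous_on_if_locally_agrees)
  fix x assume xG: "x \<in> Gamma adj a p h1"
  then have xD: "x \<in> Delta adj a p h1" unfolding Gamma_def by auto
  then obtain i j where ij: "x $ i $ j > 0" "a i j * p i j > 0"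
    using h1(1) by (rule Delta_ex_positive_weighted_entry)
  have "0 \<le> x $ i $ k" "0 \<le> x $ j $ k" "x $ j $ i = x $ i $ j" for k
    using xD unfolding Delta_def by auto
  then have "vsum x i > 0" "vsum x j > 0"
    using ij(1) entry_le_vsum[of x i j] entry_le_vsum[of x j i] by auto
  then have "isCont (\<lambda>y. a i j * p i j * y $ i $ j / (vsum y i * vsum y j)) x"
    by (rule isCont_entry_ratio)
  moreover have "open {y :: real^'v^'v. y $ i $ j > 0}"
    by (intro open_Collect_less continuous_intros)
  ultimately show "\<exists>U g. open U \<and> x \<in> U \<and> isCont g x \<and> (\<forall>y\<in>Gamma adj a p h1 \<inter> U. g y = Hfun a p y)"
    using ij Hfun_eq_ratio_on_Gamma[of _ adj a p h1 i j] by (intro exI[of _ "{y. y $ i $ j > 0}"]) auto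
qed

end
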